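(* Let $T$ be a c.n.u. contraction on $H$ and $(f,g)\in\mathfrak{H}\oplus_\perp\mathfrak{H}$. Then $(f,g)\in\widehat{A_T}$ if and only if $g(\lambda)=\lambda f(\lambda)$ for each $\lambda\in\mathbb{D}_+$ and $\lambda g(\lambda)=f(\lambda)$ for each $\lambda\in\mathbb{D}_-$.
   Context: $H$ is an infinite-dimensional separable complex Hilbert space with inner product $(\cdot,\cdot)_H$; $T\in\mathbb{B}(H)$, $\|T\|\le1$, is completely non-unitary (no nonzero invariant subspace on which $T$ is unitary). $\mathbb{K}=\ker(I-T^*T)$. $\mathbb{H}=H\oplus_\perp H$ with $[(x_1,x_2),(y_1,y_2)]=i(x_1,y_1)_H-i(x_2,y_2)_H$; $S^{\perp_s}=\{a:[a,b]=0\ \forall b\in S\}$; $A_T=\{(x,Tx):x\in\mathbb{K}\}$. $\mathbb{D}_\pm$ are two copies of the open unit disc with centers $0_\pm$; for $\lambda\in\mathbb{D}_\pm$, $\bar\lambda$ is regarded as a point of $\mathbb{D}_\mp$. $N_\lambda=\{(x,\lambda x):x\in H\}\cap A_T^{\perp_s}$ for $\lambda\in\mathbb{D}_+$, $N_\lambda=\{(\lambda x,x):x\in H\}\cap A_T^{\perp_s}$ for $\lambda\in\mathbb{D}_-$. $E_\lambda=pr_1(N_\lambda)$ ($\lambda\in\mathbb{D}_+$), $E_\lambda=pr_2(N_\lambda)$ ($\lambda\in\mathbb{D}_-$), with $pr_i$ the projection of $\mathbb{H}$ onto the $i$-th copy of $H$. $F^\dagger_\lambda=E_{\bar\lambda}$,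 $F_\lambda$ = continuous conjugate-linear functionals on $F^\dagger_\lambda$. For $x\in H$, $\hat x(\lambda)\in F_\lambda$ is $\omega\mapsto(x,\omega)_H$. The map $x\mapsto\hat x$ is injective; $\mathfrak{H}=\{\hat x:x\in H\}$ with inner product $(\hat x,\hat y)_{\mathfrak{H}}=(x,y)_H$ (this is the reproducing kernel Hilbert space of sections of $F$ with kernel $K(\lambda,\mu)=\iota_\lambda^\dagger\iota_\mu$). For $S\subseteq\mathbb{H}$, $\hat S=\{(\hat x,\hat y):(x,y)\in S\}$. *)

theory Defs
  imports "HOL-Analysis.Analysis"
begin

text \<open>An abstract complex Hilbert space: the carrier is the type 'h (with its additive
  group structure), sm is the complex scalar multiplication, ip the inner product
  (linear in the first, conjugate-linear in the second argument).\<close>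

definition hnorm :: "('h \<Rightarrow> 'h \<Rightarrow> complex) \<Rightarrow> 'h \<Rightarrow> real" where
  "hnorm ip x = sqrt (Re (ip x x))"

definition chilbert :: "(complex \<Rightarrow> 'h::ab_group_add \<Rightarrow> 'h) \<Rightarrow> ('h \<Rightarrow> 'h \<Rightarrow> complex) \<Rightarrow> bool" where
  "chilbert sm ip \<longleftrightarrow>
     (\<forall>x. sm 1 x = x) \<and> (\<forall>a b x. sm a (sm b x) = sm (a * b) x) \<and>
     (\<forall>a x y. sm a (x + y) = sm a x + sm a y) \<and> (\<forall>a b x. sm (a + b) x = sm a x + sm b x) \<and>
     (\<forall>x y z. ip (x + y) z = ip x z + ip y z) \<and> (\<forall>a x y. ip (sm a x) y = a * ip x y) \<and>
     (\<forall>x y. ip y x = cnj (ip x y)) \<and> (\<forall>x. Re (ip x x) \<ge> 0) \<and> (\<forall>x. ip x x = 0 \<longrightarrow> x = 0) \<and>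
     (\<forall>X. (\<forall>e>0. \<exists>N. \<forall>m\<ge>N. \<forall>n\<ge>N. hnorm ip (X m - X n) < e)
           \<longrightarrow> (\<exists>L. (\<lambda>n. hnorm ip (X n - L)) \<longlonglongrightarrow> 0))"

definition separable_h :: "('h::ab_group_add \<Rightarrow> 'h \<Rightarrow> complex) \<Rightarrow> bool" where
  "separable_h ip \<longleftrightarrow> (\<exists>D. countable D \<and> (\<forall>x. \<forall>e>0. \<exists>d\<in>D. hnorm ip (x - d) < e))"

definition infinite_dim_h :: "(complex \<Rightarrow> 'h::ab_group_add \<Rightarrow> 'h) \<Rightarrow> bool" where
  "infinite_dim_h sm \<longleftrightarrow> (\<forall>F. finite F \<longrightarrow> (\<exists>x. \<forall>c. x \<noteq> (\<Sum>v\<in>F. sm (c v) v)))"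

definition contraction_op :: "(complex \<Rightarrow> 'h::ab_group_add \<Rightarrow> 'h) \<Rightarrow> ('h \<Rightarrow> 'h \<Rightarrow> complex) \<Rightarrow> ('h \<Rightarrow> 'h) \<Rightarrow> bool" where
  "contraction_op sm ip T \<longleftrightarrow> (\<forall>x y. T (x + y) = T x + T y) \<and> (\<forall>a x. T (sm a x) = sm a (T x)) \<and>
     (\<forall>x. hnorm ip (T x) \<le> hnorm ip x)"

definition closed_subspace_h :: "(complex \<Rightarrow> 'h::ab_group_add \<Rightarrow> 'h) \<Rightarrow> ('h \<Rightarrow> 'h \<Rightarrow> complex) \<Rightarrow> 'h set \<Rightarrow> bool" where
  "closed_subspace_h sm ip M \<longleftrightarrow> 0 \<in> M \<and> (\<forall>x\<in>M. \<forall>y\<in>M. x + y \<in> M) \<and> (\<forall>a. \<forall>x\<in>M. sm a x \<in> M) \<and>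
     (\<forall>X L. (\<forall>n. X n \<in> M) \<and> (\<lambda>n. hnorm ip (X n - L)) \<longlonglongrightarrow> 0 \<longrightarrow> L \<in> M)"

definition cnu :: "(complex \<Rightarrow> 'h::ab_group_add \<Rightarrow> 'h) \<Rightarrow> ('h \<Rightarrow> 'h \<Rightarrow> complex) \<Rightarrow> ('h \<Rightarrow> 'h) \<Rightarrow> bool" where
  "cnu sm ip T \<longleftrightarrow> (\<forall>M. closed_subspace_h sm ip M \<and> T ` M = M \<and> (\<forall>x\<in>M. hnorm ip (T x) = hnorm ip x)
                        \<longrightarrow> M = {0})"

definition hadj :: "('h \<Rightarrow> 'h \<Rightarrow> complex) \<Rightarrow> ('h \<Rightarrow> 'h) \<Rightarrow> 'h \<Rightarrow> 'h" where
  "hadj ip T y = (THE z. \<forall>x. ip (T x) y = ip x z)"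

definition kerK :: "('h::ab_group_add \<Rightarrow> 'h \<Rightarrow> complex) \<Rightarrow> ('h \<Rightarrow> 'h) \<Rightarrow> 'h set" where
  "kerK ip T = {x. x - hadj ip T (T x) = 0}"

definition AT :: "('h::ab_group_add \<Rightarrow> 'h \<Rightarrow> complex) \<Rightarrow> ('h \<Rightarrow> 'h) \<Rightarrow> ('h \<times> 'h) set" where
  "AT ip T = {(x, T x) | x. x \<in> kerK ip T}"

definition krein :: "('h \<Rightarrow> 'h \<Rightarrow> complex) \<Rightarrow> 'h \<times> 'h \<Rightarrow> 'h \<times> 'h \<Rightarrow> complex" where
  "krein ip a b = \<i> * ip (fst a) (fst b) - \<i> * ip (snd a) (snd b)"

definition perp_s :: "('h \<Rightarrow> 'h \<Rightarrow> complex) \<Rightarrow> ('h \<times> 'h) set \<Rightarrow> ('h \<times> 'h) set" where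
  "perp_s ip S = {a. \<forall>b\<in>S. krein ip a b = 0}"

text \<open>Points of the two discs: (True, z) is z in D_+, (False, z) is z in D_-, with |z| < 1.
  The "conjugate" point of (s, z) is (\<not> s, cnj z).\<close>
definition disc_pts :: "(bool \<times> complex) set" where
  "disc_pts = {p. cmod (snd p) < 1}"

definition Nl :: "(complex \<Rightarrow> 'h::ab_group_add \<Rightarrow> 'h) \<Rightarrow> ('h \<Rightarrow> 'h \<Rightarrow> complex) \<Rightarrow> ('h \<Rightarrow> 'h) \<Rightarrow> bool \<times> complex \<Rightarrow> ('h \<times> 'h) set" where
  "Nl sm ip T p = (if fst p then {(x, sm (snd p) x) | x. True} else {(sm (snd p) x, x) | x. True})
                  \<inter> perp_s ip (AT ip T)"

definition El :: "(complex \<Rightarrow> 'h::ab_group_add \<Rightarrow> 'h) \<Rightarrow> ('h \<Rightarrow> 'h \<Rightarrow> complex) \<Rightarrow> ('h \<Rightarrow> 'h) \<Rightarrow> bool \<times> complex \<Rightarrow> 'h set" where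
  "El sm ip T p = (if fst p then fst ` Nl sm ip T p else snd ` Nl sm ip T p)"

definition Fdag :: "(complex \<Rightarrow> 'h::ab_group_add \<Rightarrow> 'h) \<Rightarrow> ('h \<Rightarrow> 'h \<Rightarrow> complex) \<Rightarrow> ('h \<Rightarrow> 'h) \<Rightarrow> bool \<times> complex \<Rightarrow> 'h set" where
  "Fdag sm ip T p = El sm ip T (\<not> fst p, cnj (snd p))"

text \<open>x-hat: lambda maps to the functional omega |-> (x, omega) on F^dagger_lambda
  (represented as a total function; only its values on F^dagger_lambda matter).\<close>
definition hat :: "('h \<Rightarrow> 'h \<Rightarrow> complex) \<Rightarrow> 'h \<Rightarrow> bool \<times> complex \<Rightarrow> 'h \<Rightarrow> complex" where
  "hat ip x = (\<lambda>p \<omega>. ip x \<omega>)"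

definition frakH :: "('h \<Rightarrow> 'h \<Rightarrow> complex) \<Rightarrow> (bool \<times> complex \<Rightarrow> 'h \<Rightarrow> complex) set" where
  "frakH ip = range (hat ip)"

definition hatS :: "('h \<Rightarrow> 'h \<Rightarrow> complex) \<Rightarrow> ('h \<times> 'h) set \<Rightarrow> ((bool \<times> complex \<Rightarrow> 'h \<Rightarrow> complex) \<times> (bool \<times> complex \<Rightarrow> 'h \<Rightarrow> complex)) set" where
  "hatS ip S = {(hat ip x, hat ip y) | x y. (x, y) \<in> S}"

end

theory Submission
  imports Defs
begin

(*
  Write K = ker (I - T*T). Since T is a contraction, K is the closed subspace of vectors on which
  T is isometric, and T maps K isometrically onto the closed subspace T K; identifying ker (I - T*T)
  with this set needs the existence of T*, which comes from the Riesz representation theorem.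

  For f = x^ and g = y^ the condition says that y - z x is orthogonal to the fibre of F^dagger over
  z in D_+, and x - z y to the fibre over z in D_-. These fibres are the orthogonal complements of
  (T - z) K and (I - z T) K, so the condition says that y - z x and x - z y lie in the closures of
  these ranges; for y = T x with x in K they even lie in the ranges themselves.

  Conversely, z = 0 gives x in K and y = T k for some k in K, and then e = x - k lies in the closure
  of (I - z T) K for every z and in the closure of (T - z) K for every z <> 0. The vectors with this
  property form a closed subspace M, contained in K (take z = 0). Letting z tend to 0 shows that
  T M lies in K and M in T K, and then elementary manipulations give T M = M. So T restricts to a
  unitary operator on M; as T is completely non-unitary, M = {0}, hence x = k and y = T x.
*)

lemma complex_linear_le_quadratic_imp_zero:
  fixes b :: complex and C :: real
  assumes le: "\<And>t. 2 * Re (cnj t * b) \<le> (cmod t)^2 * C"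
  shows "b = 0"
proof (rule ccontr)
  assume "b \<noteq> 0"
  then have B: "(cmod b)^2 > 0" by simp
  define r where "r = 1 / (\<bar>C\<bar> + 1)"
  have r: "r > 0" "r * C < 1" by (auto simp: r_def field_simps abs_if)
  have "Re (cnj (of_real r * b) * b) = r * (cmod b)^2"
    by (simp add: mult.assoc complex_norm_square[symmetric] mult.commute[of "cnj b"])
  then have "2 * (r * (cmod b)^2) \<le> r * (cmod b)^2 * (r * C)"
    using le[of "of_real r * b"] r(1) by (simp add: norm_mult power2_eq_square algebra_simps)
  also have "\<dots> < r * (cmod b)^2 * 1"
    using r B by (intro mult_strict_left_mono) auto
  finally show False using r(1) B by simp
qed

section \<open>Complex Hilbert spaces\<close>

locale complex_hilbert =
  fixes sm :: "complex \<Rightarrow> 'h::ab_group_add \<Rightarrow> 'h" and ip :: "'h \<Rightarrow> 'h \<Rightarrow> complex"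
  assumes chilbert: "chilbert sm ip"
begin

abbreviation nm :: "'h \<Rightarrow> real" where "nm \<equiv> hnorm ip"

lemma sm_one [simp]: "sm 1 x = x"
  using chilbert by (metis chilbert_def)

lemma sm_sm [simp]: "sm a (sm b x) = sm (a * b) x"
  using chilbert by (metis chilbert_def)

lemma sm_add_right [simp]: "sm a (x + y) = sm a x + sm a y"
  using chilbert by (metis chilbert_def)

lemma sm_add_left: "sm (a + b) x = sm a x + sm b x"
  using chilbert by (metis chilbert_def)

lemma ip_add_left [simp]: "ip (x + y) z = ip x z + ip y z"
  using chilbert by (metis chilbert_def)

lemma ip_sm_left [simp]: "ip (sm a x) y = a * ip x y"
  using chilbert by (metis chilbert_def)

lemma ip_sym: "ip y x = cnj (ip x y)"
  using chilbert by (metis chilbert_def)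

lemma ip_self_Re_nonneg: "Re (ip x x) \<ge> 0"
  using chilbert by (metis chilbert_def)

lemma ip_self_eq_0D: "ip x x = 0 \<Longrightarrow> x = 0"
  using chilbert by (metis chilbert_def)

lemma complete:
  assumes "\<And>e. e > 0 \<Longrightarrow> \<exists>N. \<forall>m\<ge>N. \<forall>n\<ge>N. nm (X m - X n) < e"
  shows "\<exists>L. (\<lambda>n. nm (X n - L)) \<longlonglongrightarrow> 0"
  using chilbert assms unfolding chilbert_def by metis

lemma sm_0_left [simp]: "sm 0 x = 0"
  using sm_add_left[of 0 0 x] by simp

lemma sm_0_right [simp]: "sm a 0 = 0"
  using sm_add_right[of a 0 0] by simp

lemma sm_minus_right [simp]: "sm a (- x) = - sm a x"
  using sm_add_right[of a x "- x"] by (simp add: eq_neg_iff_add_eq_0 add.commute)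

lemma sm_diff_right [simp]: "sm a (x - y) = sm a x - sm a y"
  using sm_add_right[of a x "- y"] by simp

lemma sm_minus_left: "sm (- a) x = - sm a x"
  using sm_add_left[of a "- a" x] by (simp add: eq_neg_iff_add_eq_0 add.commute)

lemma ip_0_left [simp]: "ip 0 y = 0"
  using ip_sm_left[of 0 0 y] by simp

lemma ip_minus_left [simp]: "ip (- x) y = - ip x y"
  using ip_add_left[of x "- x" y] by (simp add: eq_neg_iff_add_eq_0 add.commute)

lemma ip_diff_left [simp]: "ip (x - y) z = ip x z - ip y z"
  using ip_add_left[of x "- y" z] by simp

lemma ip_add_right [simp]: "ip x (y + z) = ip x y + ip x z"
  by (metis ip_add_left ip_sym complex_cnj_add)

lemma ip_sm_right [simp]: "ip x (sm a y) = cnj a * ip x y"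
  by (metis ip_sm_left ip_sym complex_cnj_mult)

lemma ip_0_right [simp]: "ip x 0 = 0"
  by (metis ip_0_left ip_sym complex_cnj_zero)

lemma ip_diff_right [simp]: "ip x (y - z) = ip x y - ip x z"
  by (metis ip_diff_left ip_sym complex_cnj_diff)

lemma ip_eq_0_sym: "ip x y = 0 \<longleftrightarrow> ip y x = 0"
  by (metis ip_sym complex_cnj_zero_iff)

lemma ip_eqI: "(\<And>w. ip x w = ip y w) \<Longrightarrow> x = y"
  using ip_self_eq_0D[of "x - y"] by simp

lemma ip_eqI_right: "(\<And>w. ip w x = ip w y) \<Longrightarrow> x = y"
  by (metis ip_eqI ip_sym)

lemma nm_nonneg [simp]: "nm x \<ge> 0"
  by (simp add: hnorm_def ip_self_Re_nonneg)

lemma nm_squared: "(nm x)^2 = Re (ip x x)"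
  by (simp add: hnorm_def ip_self_Re_nonneg)

lemma ip_self: "ip x x = of_real ((nm x)^2)"
proof -
  have "Im (ip x x) = 0"
    using ip_sym[of x x] by (metis cnj.simps(2) neg_equal_zero)
  then show ?thesis by (simp add: nm_squared complex_eq_iff)
qed

lemma nm_eq_0_iff [simp]: "nm x = 0 \<longleftrightarrow> x = 0"
  using ip_self[of x] ip_self_eq_0D[of x] by auto

lemma nm_0 [simp]: "nm 0 = 0"
  by simp

lemma Re_mult_cnj_self: "Re (t * cnj t * w) = (cmod t)^2 * Re w"
  by (simp flip: complex_norm_square)

lemma nm_sm [simp]: "nm (sm a x) = cmod a * nm x"
proof -
  have "ip (sm a x) (sm a x) = a * cnj a * ip x x"
    by (simp add: mult.assoc)
  then have "(nm (sm a x))^2 = (cmod a * nm x)^2"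
    by (simp only: nm_squared Re_mult_cnj_self power_mult_distrib)
  then show ?thesis by (simp add: power2_eq_iff_nonneg)
qed

lemma nm_minus [simp]: "nm (- x) = nm x"
  using nm_sm[of "- 1" x] sm_minus_left[of 1 x] by simp

lemma nm_minus_commute: "nm (x - y) = nm (y - x)"
  using nm_minus[of "x - y"] by simp

lemma nm_diff_sm_squared:
  "(nm (x - sm t y))^2 = (nm x)^2 - 2 * Re (cnj t * ip x y) + (cmod t)^2 * (nm y)^2"
proof -
  have "ip (x - sm t y) (x - sm t y)
      = ip x x - (cnj t * ip x y + cnj (cnj t * ip x y)) + t * cnj t * ip y y"
    using ip_sym[of x y] by (simp add: algebra_simps)
  then have "Re (ip (x - sm t y) (x - sm t y))
      = Re (ip x x) - 2 * Re (cnj t * ip x y) + (cmod t)^2 * Re (ip y y)"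
    by (simp only: complex_add_cnj Re_mult_cnj_self minus_complex.sel plus_complex.sel
        Re_complex_of_real)
  then show ?thesis
    by (simp only: nm_squared)
qed

lemma Cauchy_Schwarz: "cmod (ip x y) \<le> nm x * nm y"
proof (cases "y = 0")
  case False
  define Y where "Y = (nm y)^2"
  have Y: "Y > 0" using False by (simp add: Y_def)
  have "0 \<le> (nm (x - sm (ip x y / Y) y))^2" by simp
  also have "\<dots> = (nm x)^2 - (cmod (ip x y))^2 / Y"
    using Y unfolding nm_diff_sm_squared Y_def[symmetric]
    by (simp add: complex_norm_square[symmetric] norm_divide power_divide power2_eq_square
        field_simps)
  finally have "(cmod (ip x y))^2 \<le> (nm x * nm y)^2"
    using Y by (simp add: Y_def field_simps power_mult_distrib)
  then show ?thesis by (simp add: power2_le_iff_abs_le)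
qed simp

lemma nm_triangle: "nm (x + y) \<le> nm x + nm y"
proof -
  have "Re (ip x y) \<le> nm x * nm y"
    using Cauchy_Schwarz[of x y] complex_Re_le_cmod order_trans by blast
  then have "(nm (x + y))^2 \<le> (nm x + nm y)^2"
    using ip_self[of "x + y"] ip_self[of x] ip_self[of y] ip_sym[of x y]
    by (simp add: power2_sum complex_eq_iff)
  then show ?thesis by (simp add: power2_le_iff_abs_le add_nonneg_nonneg)
qed

lemma nm_triangle_diff: "nm (x - z) \<le> nm (x - y) + nm (y - z)"
  using nm_triangle[of "x - y" "y - z"] by simp

lemma nm_reverse_triangle: "\<bar>nm x - nm y\<bar> \<le> nm (x - y)"
  using nm_triangle_diff[of x 0 y] nm_triangle_diff[of y 0 x] nm_minus_commute[of x y] by simp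

lemma orthogonal_if_nearest:
  assumes "\<And>t. nm q \<le> nm (q - sm t s)"
  shows "ip q s = 0"
proof (rule complex_linear_le_quadratic_imp_zero)
  fix t
  have "(nm q)^2 \<le> (nm (q - sm t s))^2"
    using assms by (simp add: power_mono)
  then show "2 * Re (cnj t * ip q s) \<le> (cmod t)^2 * (nm s)^2"
    by (simp add: nm_diff_sm_squared)
qed

lemma parallelogram_law: "(nm (x + y))^2 + (nm (x - y))^2 = 2 * (nm x)^2 + 2 * (nm y)^2"
  by (simp add: nm_squared)

lemma hat_apply: "hat ip x p \<omega> = ip x \<omega>"
  by (simp add: hat_def)

lemma hat_eq_iff [simp]: "hat ip x = hat ip y \<longleftrightarrow> x = y"
  by (metis hat_def ip_eqI)

lemma hat_pair_mem_hatS_iff: "(hat ip x, hat ip y) \<in> hatS ip S \<longleftrightarrow> (x, y) \<in> S"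
  unfolding hatS_def by auto

section \<open>Closures, subspaces and orthogonal projection\<close>

definition hclosure :: "'h set \<Rightarrow> 'h set" where
  "hclosure S = {v. \<forall>e>0. \<exists>s\<in>S. nm (v - s) < e}"

definition hsubspace :: "'h set \<Rightarrow> bool" where
  "hsubspace S \<longleftrightarrow> 0 \<in> S \<and> (\<forall>x\<in>S. \<forall>y\<in>S. x + y \<in> S) \<and> (\<forall>a. \<forall>x\<in>S. sm a x \<in> S)"

definition hperp :: "'h set \<Rightarrow> 'h set" where
  "hperp S = {w. \<forall>s\<in>S. ip s w = 0}"

lemma hclosureI: "(\<And>e. e > 0 \<Longrightarrow> \<exists>s\<in>S. nm (v - s) < e) \<Longrightarrow> v \<in> hclosure S"
  unfolding hclosure_def by blast

lemma hclosureD: "v \<in> hclosure S \<Longrightarrow> e > 0 \<Longrightarrow> \<exists>s\<in>S. nm (v - s) < e"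
  unfolding hclosure_def by blast

lemma hclosure_subset: "S \<subseteq> hclosure S"
proof (intro subsetI hclosureI)
  fix v and e :: real
  assume "v \<in> S" "e > 0"
  then show "\<exists>s\<in>S. nm (v - s) < e" by (intro bexI[of _ v]) auto
qed

lemma hclosure_mono: "S \<subseteq> S' \<Longrightarrow> hclosure S \<subseteq> hclosure S'"
  unfolding hclosure_def by blast

lemma hclosure_hclosure [simp]: "hclosure (hclosure S) = hclosure S"
proof
  show "hclosure (hclosure S) \<subseteq> hclosure S"
  proof (intro subsetI hclosureI)
    fix v and e :: real
    assume "v \<in> hclosure (hclosure S)" "e > 0"
    then obtain u s where "u \<in> hclosure S" "nm (v - u) < e / 2" "s \<in> S" "nm (u - s) < e / 2"
      by (meson hclosureD half_gt_zero)
    then show "\<exists>s\<in>S. nm (v - s) < e"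
      using nm_triangle_diff[of v s u] by force
  qed
qed (rule hclosure_subset)

lemma hclosure_minimal: "S \<subseteq> hclosure R \<Longrightarrow> hclosure S \<subseteq> hclosure R"
  using hclosure_mono[of S "hclosure R"] by simp

lemma limit_in_hclosure:
  assumes "\<And>n. X n \<in> S" and "(\<lambda>n. nm (X n - L)) \<longlonglongrightarrow> 0"
  shows "L \<in> hclosure S"
proof (rule hclosureI)
  fix e :: real assume "e > 0"
  then obtain N where "\<forall>n\<ge>N. norm (nm (X n - L) - 0) < e"
    using LIMSEQ_D[OF assms(2)] by blast
  then have "nm (L - X N) < e"
    by (simp add: nm_minus_commute)
  then show "\<exists>s\<in>S. nm (L - s) < e"
    using assms(1) by blast
qed

lemma hsubspace_0: "hsubspace S \<Longrightarrow> 0 \<in> S"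
  and hsubspace_add: "hsubspace S \<Longrightarrow> x \<in> S \<Longrightarrow> y \<in> S \<Longrightarrow> x + y \<in> S"
  and hsubspace_sm: "hsubspace S \<Longrightarrow> x \<in> S \<Longrightarrow> sm a x \<in> S"
  by (simp_all add: hsubspace_def)

lemma hsubspace_minus: "hsubspace S \<Longrightarrow> x \<in> S \<Longrightarrow> - x \<in> S"
  using hsubspace_sm[of S x "- 1"] sm_minus_left[of 1 x] by simp

lemma hsubspace_diff: "hsubspace S \<Longrightarrow> x \<in> S \<Longrightarrow> y \<in> S \<Longrightarrow> x - y \<in> S"
  using hsubspace_add[of S x "- y"] hsubspace_minus by simp

lemma hsubspace_Int: "hsubspace S \<Longrightarrow> hsubspace S' \<Longrightarrow> hsubspace (S \<inter> S')"
  unfolding hsubspace_def by blast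

lemma hsubspace_Inter:
  assumes "\<And>i. i \<in> I \<Longrightarrow> hsubspace (S i)"
  shows "hsubspace (\<Inter>i\<in>I. S i)"
  using assms unfolding hsubspace_def by blast

lemma hsubspace_image:
  assumes S: "hsubspace S"
    and add: "\<And>x y. f (x + y) = f x + f y" and hom: "\<And>a x. f (sm a x) = sm a (f x)"
  shows "hsubspace (f ` S)"
  unfolding hsubspace_def
proof (intro conjI ballI allI)
  have "f 0 = 0" using hom[of 0 0] by simp
  then show "0 \<in> f ` S" using hsubspace_0[OF S] by (metis image_eqI)
next
  fix x y assume "x \<in> f ` S" "y \<in> f ` S"
  then show "x + y \<in> f ` S" using add hsubspace_add[OF S] by (auto simp flip: add)
next
  fix a x assume "x \<in> f ` S"
  then show "sm a x \<in> f ` S" using hsubspace_sm[OF S] by (auto simp flip: hom)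
qed

lemma hsubspace_hclosure:
  assumes S: "hsubspace S"
  shows "hsubspace (hclosure S)"
  unfolding hsubspace_def
proof (intro conjI ballI allI)
  show "0 \<in> hclosure S" using S hclosure_subset hsubspace_0 by blast
next
  fix x y assume x: "x \<in> hclosure S" and y: "y \<in> hclosure S"
  show "x + y \<in> hclosure S"
  proof (rule hclosureI)
    fix e :: real assume "e > 0"
    then obtain s t where "s \<in> S" "nm (x - s) < e / 2" "t \<in> S" "nm (y - t) < e / 2"
      using hclosureD[OF x] hclosureD[OF y] half_gt_zero by meson
    moreover have "nm (x + y - (s + t)) \<le> nm (x - s) + nm (y - t)"
      using nm_triangle[of "x - s" "y - t"] by (simp add: algebra_simps)
    ultimately have "s + t \<in> S" "nm (x + y - (s + t)) < e"
      using hsubspace_add[OF S] by auto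
    then show "\<exists>r\<in>S. nm (x + y - r) < e" ..
  qed
next
  fix a x assume x: "x \<in> hclosure S"
  show "sm a x \<in> hclosure S"
  proof (rule hclosureI)
    fix e :: real assume "e > 0"
    have pos: "cmod a + 1 > 0"
      by (intro add_nonneg_pos) auto
    obtain s where "s \<in> S" "nm (x - s) < e / (cmod a + 1)"
      using hclosureD[OF x] \<open>e > 0\<close> pos by (meson divide_pos_pos)
    then have "(cmod a + 1) * nm (x - s) < e"
      using pos by (simp add: pos_less_divide_eq mult.commute)
    moreover have "cmod a * nm (x - s) \<le> (cmod a + 1) * nm (x - s)"
      by (simp add: mult_right_mono)
    ultimately have "nm (sm a x - sm a s) < e"
      using nm_sm[of a "x - s"] by simp
    then show "\<exists>r\<in>S. nm (sm a x - r) < e"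
      using \<open>s \<in> S\<close> hsubspace_sm[OF S] by blast
  qed
qed

lemma hclosure_add: "hsubspace S \<Longrightarrow> x \<in> hclosure S \<Longrightarrow> y \<in> hclosure S \<Longrightarrow> x + y \<in> hclosure S"
  and hclosure_diff: "hsubspace S \<Longrightarrow> x \<in> hclosure S \<Longrightarrow> y \<in> hclosure S \<Longrightarrow> x - y \<in> hclosure S"
  and hclosure_sm: "hsubspace S \<Longrightarrow> x \<in> hclosure S \<Longrightarrow> sm a x \<in> hclosure S"
  by (simp_all add: hsubspace_hclosure hsubspace_add hsubspace_diff hsubspace_sm)

lemma closed_subspace_hI:
  assumes "hsubspace S" and "hclosure S \<subseteq> S"
  shows "closed_subspace_h sm ip S"
  unfolding closed_subspace_h_def
proof (intro conjI ballI allI impI)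
  fix X L assume "(\<forall>n. X n \<in> S) \<and> (\<lambda>n. nm (X n - L)) \<longlonglongrightarrow> 0"
  then show "L \<in> S" using limit_in_hclosure assms(2) by blast
qed (use assms(1) in \<open>simp_all add: hsubspace_def\<close>)

lemma convergent_if_Cauchy_bound:
  assumes \<delta>: "\<delta> \<longlonglongrightarrow> 0" and bound: "\<And>m n. nm (X m - X n) \<le> \<delta> m + \<delta> n"
  shows "\<exists>L. (\<lambda>n. nm (X n - L)) \<longlonglongrightarrow> 0"
proof (rule complete)
  fix e :: real assume "e > 0"
  then obtain N where N: "\<forall>n\<ge>N. norm (\<delta> n - 0) < e / 2"
    using LIMSEQ_D[OF \<delta>, of "e / 2"] by auto
  have "nm (X m - X n) < e" if "m \<ge> N" "n \<ge> N" for m n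
  proof -
    have "\<delta> m < e / 2" "\<delta> n < e / 2"
      using N that by auto
    then show ?thesis using bound[of m n] by linarith
  qed
  then show "\<exists>N. \<forall>m\<ge>N. \<forall>n\<ge>N. nm (X m - X n) < e" by blast
qed

lemma near_minimizers_close:
  assumes C: "hsubspace C" "a \<in> C" "b \<in> C" and d: "\<And>c. c \<in> C \<Longrightarrow> d \<le> (nm (u - c))^2"
  shows "(nm (a - b))^2 \<le> 2 * ((nm (u - a))^2 - d) + 2 * ((nm (u - b))^2 - d)"
proof -
  define mid where "mid = sm (1 / 2) (a + b)"
  have "mid \<in> C"
    unfolding mid_def using C by (simp add: hsubspace_add hsubspace_sm)
  have "(u - a) + (u - b) = sm 2 (u - mid)"
    using sm_add_left[of 1 1 u] by (simp add: mid_def algebra_simps)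
  then have "nm ((u - a) + (u - b)) = 2 * nm (u - mid)"
    by (simp only: nm_sm) simp
  then have "4 * d \<le> (nm ((u - a) + (u - b)))^2"
    using d[OF \<open>mid \<in> C\<close>] by (simp add: power_mult_distrib)
  moreover have
    "(nm (a - b))^2 = 2 * (nm (u - a))^2 + 2 * (nm (u - b))^2 - (nm ((u - a) + (u - b)))^2"
    using parallelogram_law[of "u - a" "u - b"] nm_minus_commute[of a b] by simp
  ultimately show ?thesis
    by (simp add: algebra_simps)
qed

lemma nearest_point_exists:
  assumes C: "hsubspace C" "hclosure C \<subseteq> C"
  shows "\<exists>p\<in>C. \<forall>c\<in>C. nm (u - p) \<le> nm (u - c)"
proof -
  define D where "D = (\<lambda>c. (nm (u - c))^2) ` C"
  define d where "d = Inf D"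
  have bdd: "bdd_below D" unfolding D_def by (rule bdd_belowI[of _ 0]) auto
  have d_le: "d \<le> (nm (u - c))^2" if "c \<in> C" for c
    unfolding d_def using that bdd by (auto simp: D_def intro: cInf_lower)
  define \<delta> where "\<delta> n = inverse (real (Suc n))" for n
  have "\<exists>c\<in>C. (nm (u - c))^2 < d + (\<delta> n)^2 / 2" for n
  proof -
    have "D \<noteq> {}" using hsubspace_0[OF C(1)] by (auto simp: D_def)
    moreover have "Inf D < d + (\<delta> n)^2 / 2" by (simp add: d_def \<delta>_def)
    ultimately show ?thesis using cInf_less_iff[OF _ bdd] by (auto simp: D_def)
  qed
  then obtain c where c: "\<And>n. c n \<in> C" "\<And>n. (nm (u - c n))^2 < d + (\<delta> n)^2 / 2"
    by metis
  have "nm (c m - c n) \<le> \<delta> m + \<delta> n" for m n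
  proof -
    have "(nm (c m - c n))^2 \<le> 2 * ((nm (u - c m))^2 - d) + 2 * ((nm (u - c n))^2 - d)"
      by (rule near_minimizers_close[OF C(1) c(1) c(1)]) (rule d_le)
    also have "\<dots> \<le> (\<delta> m)^2 + (\<delta> n)^2"
      using c(2)[of m] c(2)[of n] by (simp add: algebra_simps)
    also have "\<dots> \<le> (\<delta> m + \<delta> n)^2"
      by (simp add: power2_sum \<delta>_def)
    finally show ?thesis
      by (rule power2_le_imp_le) (simp add: \<delta>_def)
  qed
  moreover have \<delta>: "\<delta> \<longlonglongrightarrow> 0"
    unfolding \<delta>_def by (rule LIMSEQ_inverse_real_of_nat)
  ultimately obtain p where p: "(\<lambda>n. nm (c n - p)) \<longlonglongrightarrow> 0"
    using convergent_if_Cauchy_bound by blast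
  have "p \<in> C" using limit_in_hclosure[OF c(1) p] C(2) by blast
  have "nm (u - p) \<le> sqrt (d + 0^2 / 2) + 0"
  proof (rule LIMSEQ_le_const)
    show "(\<lambda>n. sqrt (d + (\<delta> n)^2 / 2) + nm (c n - p)) \<longlonglongrightarrow> sqrt (d + 0^2 / 2) + 0"
      by (intro tendsto_intros \<delta> p) simp
    have "nm (u - p) \<le> sqrt (d + (\<delta> n)^2 / 2) + nm (c n - p)" for n
    proof -
      have "nm (u - c n) \<le> sqrt (d + (\<delta> n)^2 / 2)"
        using c(2)[of n] by (simp add: real_le_rsqrt)
      then show ?thesis using nm_triangle_diff[of u p "c n"] by linarith
    qed
    then show "\<exists>N. \<forall>n\<ge>N. nm (u - p) \<le> sqrt (d + (\<delta> n)^2 / 2) + nm (c n - p)" by blast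
  qed
  then have "nm (u - p) \<le> nm (u - c)" if "c \<in> C" for c
    using real_sqrt_le_mono[OF d_le[OF that]] by simp
  then show ?thesis using \<open>p \<in> C\<close> by blast
qed

lemma orthogonal_projection_exists:
  assumes "hsubspace C" and "hclosure C \<subseteq> C"
  shows "\<exists>p\<in>C. u - p \<in> hperp C"
proof -
  obtain p where p: "p \<in> C" "\<forall>c\<in>C. nm (u - p) \<le> nm (u - c)"
    using nearest_point_exists[OF assms] by blast
  have "ip (u - p) s = 0" if "s \<in> C" for s
  proof (rule orthogonal_if_nearest)
    fix t
    have "p + sm t s \<in> C"
      using p(1) that assms(1) by (simp add: hsubspace_add hsubspace_sm)
    then show "nm (u - p) \<le> nm (u - p - sm t s)"
      using p(2) by (simp add: diff_diff_eq)
  qed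
  then show ?thesis
    using p(1) ip_eq_0_sym unfolding hperp_def by blast
qed

lemma mem_hclosure_if_perp_perp:
  assumes "hsubspace S" and "\<And>w. w \<in> hperp S \<Longrightarrow> ip u w = 0"
  shows "u \<in> hclosure S"
proof -
  obtain p where p: "p \<in> hclosure S" "u - p \<in> hperp (hclosure S)"
    using orthogonal_projection_exists[OF hsubspace_hclosure[OF assms(1)]] by auto
  have "u - p \<in> hperp S"
    using p(2) hclosure_subset unfolding hperp_def by blast
  then have "ip u (u - p) = 0" by (rule assms(2))
  moreover have "ip p (u - p) = 0"
    using p unfolding hperp_def by blast
  ultimately have "ip (u - p) (u - p) = 0" by simp
  then have "u - p = 0" by (rule ip_self_eq_0D)
  with p(1) show ?thesis by simp
qed

lemma hclosure_kernel_bounded: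
  fixes \<phi> :: "'h \<Rightarrow> complex"
  assumes diff: "\<And>u v. \<phi> (u - v) = \<phi> u - \<phi> v" and bounded: "\<And>u. cmod (\<phi> u) \<le> B * nm u"
  shows "hclosure {u. \<phi> u = 0} \<subseteq> {u. \<phi> u = 0}"
proof
  fix u assume u: "u \<in> hclosure {u. \<phi> u = 0}"
  have "cmod (\<phi> u) \<le> 0 + e" if "e > 0" for e
  proof -
    have pos: "\<bar>B\<bar> + 1 > 0" by simp
    then have "e / (\<bar>B\<bar> + 1) > 0" using that by simp
    then obtain s where s: "\<phi> s = 0" "nm (u - s) < e / (\<bar>B\<bar> + 1)"
      using hclosureD[OF u] by blast
    have "cmod (\<phi> u) = cmod (\<phi> (u - s))"
      using s(1) by (simp add: diff)
    also have "\<dots> \<le> B * nm (u - s)" by (rule bounded)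
    also have "\<dots> \<le> (\<bar>B\<bar> + 1) * nm (u - s)"
      by (intro mult_right_mono) auto
    also have "\<dots> \<le> e"
      using s(2) pos by (simp add: pos_less_divide_eq mult.commute)
    finally show ?thesis by simp
  qed
  then show "u \<in> {u. \<phi> u = 0}"
    using field_le_epsilon[of "cmod (\<phi> u)" 0] by simp
qed

lemma riesz_representation:
  fixes \<phi> :: "'h \<Rightarrow> complex"
  assumes add: "\<And>u v. \<phi> (u + v) = \<phi> u + \<phi> v" and hom: "\<And>a u. \<phi> (sm a u) = a * \<phi> u"
    and bounded: "\<And>u. cmod (\<phi> u) \<le> B * nm u"
  shows "\<exists>z. \<forall>u. \<phi> u = ip u z"
proof (cases "\<forall>u. \<phi> u = 0")
  case True
  then show ?thesis by (intro exI[of _ 0]) simp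
next
  case False
  then obtain u0 where u0: "\<phi> u0 \<noteq> 0" by blast
  define N where "N = {u. \<phi> u = 0}"
  have \<phi>_0: "\<phi> 0 = 0"
    using hom[of 0 0] by simp
  have \<phi>_diff: "\<phi> (u - v) = \<phi> u - \<phi> v" for u v
    using add[of "u - v" v] by simp
  have "hsubspace N"
    using add hom \<phi>_0 by (simp add: hsubspace_def N_def)
  moreover have "hclosure N \<subseteq> N"
    unfolding N_def using \<phi>_diff bounded by (rule hclosure_kernel_bounded)
  ultimately obtain p where p: "p \<in> N" "u0 - p \<in> hperp N"
    using orthogonal_projection_exists by blast
  define q where "q = u0 - p"
  have q: "\<phi> q \<noteq> 0" "q \<in> hperp N"
    using p u0 by (simp_all add: q_def N_def \<phi>_diff)
  have qq: "ip q q \<noteq> 0"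
    using q(1) \<phi>_0 ip_self_eq_0D by auto
  show ?thesis
  proof (intro exI allI)
    fix u
    define c where "c = \<phi> u / \<phi> q"
    have "u - sm c q \<in> N"
      using q(1) by (simp add: N_def \<phi>_diff hom c_def)
    then have "ip (u - sm c q) q = 0"
      using q(2) unfolding hperp_def by blast
    then have "ip u q = c * ip q q" by simp
    then show "\<phi> u = ip u (sm (cnj (\<phi> q / ip q q)) q)"
      using q(1) qq by (simp add: c_def)
  qed
qed

lemma hclosure_image_isometric:
  assumes S: "hsubspace S" "hclosure S \<subseteq> S"
    and diff: "\<And>x y. f (x - y) = f x - f y" and isometric: "\<And>x. x \<in> S \<Longrightarrow> nm (f x) = nm x"
  shows "hclosure (f ` S) \<subseteq> f ` S"
proof
  fix v assume v: "v \<in> hclosure (f ` S)"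
  define \<delta> where "\<delta> n = inverse (real (Suc n))" for n
  have \<delta>: "\<delta> \<longlonglongrightarrow> 0"
    unfolding \<delta>_def by (rule LIMSEQ_inverse_real_of_nat)
  have "\<exists>k\<in>S. nm (v - f k) < \<delta> n" for n
    using hclosureD[OF v, of "\<delta> n"] by (auto simp: \<delta>_def)
  then obtain k where k: "\<And>n. k n \<in> S" "\<And>n. nm (v - f (k n)) < \<delta> n"
    by metis
  have "nm (k m - k n) \<le> \<delta> m + \<delta> n" for m n
  proof -
    have "nm (k m - k n) = nm (f (k m) - f (k n))"
      using isometric[OF hsubspace_diff[OF S(1) k(1) k(1)]] diff by simp
    also have "\<dots> \<le> nm (v - f (k m)) + nm (v - f (k n))"
      using nm_triangle_diff[of "f (k m)" "f (k n)" v] nm_minus_commute[of "f (k m)" v] by simp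
    finally show ?thesis using k(2)[of m] k(2)[of n] by linarith
  qed
  then obtain L where L: "(\<lambda>n. nm (k n - L)) \<longlonglongrightarrow> 0"
    using convergent_if_Cauchy_bound[OF \<delta>] by blast
  have "L \<in> S"
    using limit_in_hclosure[OF k(1) L] S(2) by blast
  have "nm (v - f L) \<le> 0 + 0"
  proof (rule LIMSEQ_le_const)
    show "(\<lambda>n. \<delta> n + nm (k n - L)) \<longlonglongrightarrow> 0 + 0"
      by (intro tendsto_add \<delta> L)
    have "nm (v - f L) \<le> \<delta> n + nm (k n - L)" for n
    proof -
      have "nm (f (k n) - f L) = nm (k n - L)"
        using isometric[OF hsubspace_diff[OF S(1) k(1) \<open>L \<in> S\<close>]] diff by simp
      then show ?thesis
        using nm_triangle_diff[of v "f L" "f (k n)"] k(2)[of n] by linarith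
    qed
    then show "\<exists>N. \<forall>n\<ge>N. nm (v - f L) \<le> \<delta> n + nm (k n - L)" by blast
  qed
  then have "nm (v - f L) = 0"
    using nm_nonneg[of "v - f L"] by linarith
  then show "v \<in> f ` S"
    using \<open>L \<in> S\<close> by auto
qed

lemma nm_diff_le_perturbed:
  assumes "nm y \<le> nm x" and "0 \<le> t" and "t \<le> 1 / 2"
  shows "nm (v - x)
    \<le> nm (v - (x - sm (of_real t) y)) + 2 * t * (nm v + nm (v - (x - sm (of_real t) y)))"
proof -
  define a where "a = x - sm (of_real t) y"
  have small: "nm (sm (of_real t) y) \<le> t * nm x"
    using assms by (simp add: mult_left_mono)
  have "nm x \<le> nm a + t * nm x"
    using nm_triangle[of a "sm (of_real t) y"] small by (simp add: a_def)
  then have "nm x \<le> 2 * nm a"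
    using mult_right_mono[OF assms(3), of "nm x"] by simp
  also have "nm a \<le> nm v + nm (v - a)"
    using nm_triangle_diff[of a 0 v] nm_minus_commute[of a v] by simp
  finally have "t * nm x \<le> t * (2 * (nm v + nm (v - a)))"
    using assms(2) by (intro mult_left_mono) auto
  moreover have "nm (v - x) \<le> nm (v - a) + nm (sm (of_real t) y)"
    using nm_triangle_diff[of v x a] by (simp add: a_def)
  ultimately show ?thesis
    using small unfolding a_def by linarith
qed

lemma hclosure_perturbation:
  assumes perturbed: "\<And>t. 0 < t \<Longrightarrow> t \<le> 1 / 2 \<Longrightarrow> v \<in> hclosure ((\<lambda>k. f k - sm (of_real t) (g k)) ` S)"
    and dominated: "\<And>k. k \<in> S \<Longrightarrow> nm (g k) \<le> nm (f k)"
  shows "v \<in> hclosure (f ` S)"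
proof (rule hclosureI)
  fix e :: real assume "e > 0"
  define t where "t = min (1 / 2) (e / (4 * (nm v + 1)))"
  have c: "4 * (nm v + 1) > 0"
    by (simp add: add_nonneg_pos)
  have t: "0 < t" "t \<le> 1 / 2" "2 * t * (nm v + 1) \<le> e / 2"
  proof -
    show "0 < t"
      using \<open>e > 0\<close> c by (simp add: t_def)
    show "t \<le> 1 / 2"
      unfolding t_def by (rule min.cobounded1)
    have "t \<le> e / (4 * (nm v + 1))"
      by (simp add: t_def)
    then show "2 * t * (nm v + 1) \<le> e / 2"
      using c by (simp add: pos_le_divide_eq mult.commute mult.left_commute)
  qed
  obtain k where k: "k \<in> S" "nm (v - (f k - sm (of_real t) (g k))) < min 1 (e / 2)"
    using hclosureD[OF perturbed[OF t(1,2)], of "min 1 (e / 2)"] \<open>e > 0\<close> by auto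
  have "2 * t * (nm v + nm (v - (f k - sm (of_real t) (g k)))) \<le> 2 * t * (nm v + 1)"
    using k(2) t(1) by (intro mult_left_mono) auto
  then have "nm (v - f k) < e"
    using nm_diff_le_perturbed[OF dominated[OF k(1)] less_imp_le[OF t(1)] t(2), of v] k(2) t(3)
    by linarith
  then show "\<exists>s\<in>f ` S. nm (v - s) < e"
    using k(1) by blast
qed

end

section \<open>Contractions\<close>

locale hilbert_contraction = complex_hilbert sm ip
  for sm :: "complex \<Rightarrow> 'h::ab_group_add \<Rightarrow> 'h" and ip :: "'h \<Rightarrow> 'h \<Rightarrow> complex" +
  fixes T :: "'h \<Rightarrow> 'h"
  assumes contraction: "contraction_op sm ip T"
begin

lemma T_add [simp]: "T (x + y) = T x + T y"
  and T_sm [simp]: "T (sm a x) = sm a (T x)"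
  and nm_T_le: "nm (T x) \<le> nm x"
  using contraction unfolding contraction_op_def by blast+

lemma T_0 [simp]: "T 0 = 0"
  using T_add[of 0 0] by simp

lemma T_diff [simp]: "T (x - y) = T x - T y"
  using T_add[of "x - y" y] by (simp add: eq_diff_eq)

lemma nm_T_diff_le: "nm (T x - T y) \<le> nm (x - y)"
  using nm_T_le[of "x - y"] by simp

text \<open>hadj is a definite description; the Riesz representation of u \<mapsto> ip (T u) w shows that
  it denotes the adjoint.\<close>

lemma ip_hadj: "ip (T u) w = ip u (hadj ip T w)"
proof -
  have "\<exists>z. \<forall>u. ip (T u) w = ip u z"
  proof (rule riesz_representation)
    fix u
    show "cmod (ip (T u) w) \<le> nm w * nm u"
      using Cauchy_Schwarz[of "T u" w] nm_T_le[of u]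
      by (metis mult.commute mult_left_mono nm_nonneg order_trans)
  qed simp_all
  then obtain z where z: "\<forall>u. ip (T u) w = ip u z" by blast
  have "hadj ip T w = z"
    unfolding hadj_def
  proof (rule the_equality)
    fix z' assume "\<forall>u. ip (T u) w = ip u z'"
    then show "z' = z" using z by (intro ip_eqI_right) simp
  qed (rule z)
  then show ?thesis using z by simp
qed

definition isometric_vectors :: "'h set" where
  "isometric_vectors = {v. nm (T v) = nm v}"

lemma isometric_vectors_iff: "v \<in> isometric_vectors \<longleftrightarrow> (\<forall>u. ip (T u) (T v) = ip u v)"
proof
  assume v: "v \<in> isometric_vectors"
  show "\<forall>u. ip (T u) (T v) = ip u v"
  proof
    fix u
    \<comment> \<open>The contraction inequality for v - t u is an equality at t = 0, so its linear term
      in t must vanish.\<close>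
    have "ip v u - ip (T v) (T u) = 0"
    proof (rule complex_linear_le_quadratic_imp_zero)
      fix t
      have "(nm (T v - sm t (T u)))^2 \<le> (nm (v - sm t u))^2"
        using nm_T_le[of "v - sm t u"] by (simp add: power_mono)
      then show "2 * Re (cnj t * (ip v u - ip (T v) (T u)))
          \<le> (cmod t)^2 * ((nm u)^2 - (nm (T u))^2)"
        using v
        unfolding nm_diff_sm_squared isometric_vectors_def right_diff_distrib minus_complex.sel
        by simp
    qed
    then show "ip (T u) (T v) = ip u v"
      by (metis eq_iff_diff_eq_0 ip_sym)
  qed
next
  assume "\<forall>u. ip (T u) (T v) = ip u v"
  then have "(nm (T v))^2 = (nm v)^2"
    by (simp add: nm_squared)
  then show "v \<in> isometric_vectors"
    by (simp add: isometric_vectors_def power2_eq_iff_nonneg)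
qed

lemma kerK_eq_isometric_vectors: "kerK ip T = isometric_vectors"
proof (intro set_eqI)
  fix v
  have "v \<in> kerK ip T \<longleftrightarrow> hadj ip T (T v) = v"
    by (auto simp: kerK_def)
  also have "\<dots> \<longleftrightarrow> (\<forall>u. ip u (hadj ip T (T v)) = ip u v)"
    using ip_eqI_right by auto
  also have "\<dots> \<longleftrightarrow> v \<in> isometric_vectors"
    by (simp add: isometric_vectors_iff flip: ip_hadj)
  finally show "v \<in> kerK ip T \<longleftrightarrow> v \<in> isometric_vectors" .
qed

lemma hsubspace_isometric_vectors: "hsubspace isometric_vectors"
  by (simp add: hsubspace_def isometric_vectors_iff)

lemma hclosure_isometric_vectors: "hclosure isometric_vectors \<subseteq> isometric_vectors"
proof
  fix v assume v: "v \<in> hclosure isometric_vectors"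
  have "\<bar>nm (T v) - nm v\<bar> \<le> e" if "e > 0" for e
  proof -
    obtain k where k: "k \<in> isometric_vectors" "nm (v - k) < e / 2"
      using hclosureD[OF v] \<open>e > 0\<close> half_gt_zero by blast
    have "\<bar>nm (T v) - nm (T k)\<bar> \<le> nm (v - k)"
      using nm_reverse_triangle[of "T v" "T k"] nm_T_diff_le[of v k] by linarith
    moreover have "\<bar>nm v - nm k\<bar> \<le> nm (v - k)"
      by (rule nm_reverse_triangle)
    moreover have "nm (T k) = nm k"
      using k(1) by (simp add: isometric_vectors_def)
    ultimately show ?thesis
      using k(2) by linarith
  qed
  then show "v \<in> isometric_vectors"
    using dense_eq0_I[of "nm (T v) - nm v"] by (simp add: isometric_vectors_def)
qed

lemma hclosure_T_image_isometric_vectors: "hclosure (T ` isometric_vectors) \<subseteq> T ` isometric_vectors"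
  by (rule hclosure_image_isometric[OF hsubspace_isometric_vectors hclosure_isometric_vectors])
    (simp_all add: isometric_vectors_def)

definition range_I_minus_zT :: "complex \<Rightarrow> 'h set" where
  "range_I_minus_zT z = (\<lambda>k. k - sm z (T k)) ` isometric_vectors"

definition range_T_minus_zI :: "complex \<Rightarrow> 'h set" where
  "range_T_minus_zI z = (\<lambda>k. T k - sm z k) ` isometric_vectors"

lemma range_I_minus_zT_0 [simp]: "range_I_minus_zT 0 = isometric_vectors"
  by (simp add: range_I_minus_zT_def)

lemma range_T_minus_zI_0 [simp]: "range_T_minus_zI 0 = T ` isometric_vectors"
  by (simp add: range_T_minus_zI_def)

lemma hsubspace_range_I_minus_zT: "hsubspace (range_I_minus_zT z)"
  unfolding range_I_minus_zT_def
  by (rule hsubspace_image[OF hsubspace_isometric_vectors]) (simp_all add: algebra_simps)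

lemma hsubspace_range_T_minus_zI: "hsubspace (range_T_minus_zI z)"
  unfolding range_T_minus_zI_def
  by (rule hsubspace_image[OF hsubspace_isometric_vectors]) (simp_all add: algebra_simps)

lemma mem_hclosure_range_I_minus_zT:
  "k \<in> isometric_vectors \<Longrightarrow> k - sm z (T k) \<in> hclosure (range_I_minus_zT z)"
  unfolding range_I_minus_zT_def by (rule subsetD[OF hclosure_subset imageI])

lemma mem_hclosure_range_T_minus_zI:
  "k \<in> isometric_vectors \<Longrightarrow> T k - sm z k \<in> hclosure (range_T_minus_zI z)"
  unfolding range_T_minus_zI_def by (rule subsetD[OF hclosure_subset imageI])

lemma perp_s_AT_iff: "(a, b) \<in> perp_s ip (AT ip T) \<longleftrightarrow> (\<forall>k\<in>isometric_vectors. ip a k = ip b (T k))"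
  by (auto simp: perp_s_def AT_def krein_def kerK_eq_isometric_vectors
      simp flip: right_diff_distrib)

lemma Fdag_True: "Fdag sm ip T (True, z) = hperp (range_T_minus_zI z)"
proof -
  have "(sm (cnj z) \<omega>, \<omega>) \<in> perp_s ip (AT ip T) \<longleftrightarrow> \<omega> \<in> hperp (range_T_minus_zI z)" for \<omega>
  proof -
    have "ip (T k - sm z k) \<omega> = 0 \<longleftrightarrow> ip (sm (cnj z) \<omega>) k = ip \<omega> (T k)" for k
    proof -
      have "ip (T k - sm z k) \<omega> = cnj (ip \<omega> (T k) - ip (sm (cnj z) \<omega>) k)"
        using ip_sym[of \<omega> k] ip_sym[of \<omega> "T k"] by simp
      then show ?thesis by (metis complex_cnj_zero_iff right_minus_eq)
    qed
    then show ?thesis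
      unfolding perp_s_AT_iff hperp_def range_T_minus_zI_def by blast
  qed
  then show ?thesis
    by (force simp: Fdag_def El_def Nl_def)
qed

lemma Fdag_False: "Fdag sm ip T (False, z) = hperp (range_I_minus_zT z)"
proof -
  have "(\<omega>, sm (cnj z) \<omega>) \<in> perp_s ip (AT ip T) \<longleftrightarrow> \<omega> \<in> hperp (range_I_minus_zT z)" for \<omega>
  proof -
    have "ip (k - sm z (T k)) \<omega> = 0 \<longleftrightarrow> ip \<omega> k = ip (sm (cnj z) \<omega>) (T k)" for k
    proof -
      have "ip (k - sm z (T k)) \<omega> = cnj (ip \<omega> k - ip (sm (cnj z) \<omega>) (T k))"
        using ip_sym[of \<omega> k] ip_sym[of \<omega> "T k"] by simp
      then show ?thesis by (metis complex_cnj_zero_iff right_minus_eq)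
    qed
    then show ?thesis
      unfolding perp_s_AT_iff hperp_def range_I_minus_zT_def by blast
  qed
  then show ?thesis
    by (force simp: Fdag_def El_def Nl_def)
qed

section \<open>The unitary part\<close>

text \<open>z = 0 is excluded in the second family: the closure of (T - 0) K is T K, which need not
  contain the vector x - k of the converse direction.\<close>

definition unitary_part :: "'h set" where
  "unitary_part = (\<Inter>z\<in>{z. cmod z < 1}. hclosure (range_I_minus_zT z))
                \<inter> (\<Inter>z\<in>{z. 0 < cmod z \<and> cmod z < 1}. hclosure (range_T_minus_zI z))"

lemma mem_unitary_part_iff:
  "v \<in> unitary_part \<longleftrightarrow>
     (\<forall>z. cmod z < 1 \<longrightarrow> v \<in> hclosure (range_I_minus_zT z)) \<and>
     (\<forall>z. 0 < cmod z \<and> cmod z < 1 \<longrightarrow> v \<in> hclosure (range_T_minus_zI z))"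
  by (auto simp: unitary_part_def)

lemma unitary_part_subset: "unitary_part \<subseteq> isometric_vectors"
proof
  fix v assume "v \<in> unitary_part"
  then have "\<forall>z. cmod z < 1 \<longrightarrow> v \<in> hclosure (range_I_minus_zT z)"
    by (simp add: mem_unitary_part_iff)
  then have "v \<in> hclosure (range_I_minus_zT 0)"
    by (metis norm_zero zero_less_one)
  then show "v \<in> isometric_vectors"
    using hclosure_isometric_vectors by auto
qed

lemma closed_subspace_unitary_part: "closed_subspace_h sm ip unitary_part"
proof (rule closed_subspace_hI)
  show "hsubspace unitary_part"
    unfolding unitary_part_def
    by (intro hsubspace_Int hsubspace_Inter hsubspace_hclosure
        hsubspace_range_I_minus_zT hsubspace_range_T_minus_zI)
  show "hclosure unitary_part \<subseteq> unitary_part"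
  proof
    fix v assume v: "v \<in> hclosure unitary_part"
    have "hclosure unitary_part \<subseteq> hclosure (range_I_minus_zT z)" if "cmod z < 1" for z
      by (rule hclosure_minimal) (use that in \<open>auto simp: unitary_part_def\<close>)
    moreover have "hclosure unitary_part \<subseteq> hclosure (range_T_minus_zI z)"
      if "0 < cmod z" "cmod z < 1" for z
      by (rule hclosure_minimal) (use that in \<open>auto simp: unitary_part_def\<close>)
    ultimately show "v \<in> unitary_part"
      unfolding mem_unitary_part_iff using v by blast
  qed
qed

lemma T_mem_hclosure_range_I_minus_zT:
  assumes "v \<in> hclosure (range_I_minus_zT z)" and "v \<in> isometric_vectors" and "z \<noteq> 0"
  shows "T v \<in> hclosure (range_I_minus_zT z)"
proof -
  have "sm (1 / z) (v - (v - sm z (T v))) \<in> hclosure (range_I_minus_zT z)"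
    by (intro hclosure_sm[OF hsubspace_range_I_minus_zT]
        hclosure_diff[OF hsubspace_range_I_minus_zT assms(1)
          mem_hclosure_range_I_minus_zT[OF assms(2)]])
  then show ?thesis
    using assms(3) by simp
qed

lemma T_mem_hclosure_range_T_minus_zI:
  assumes "v \<in> hclosure (range_T_minus_zI z)" and "v \<in> isometric_vectors"
  shows "T v \<in> hclosure (range_T_minus_zI z)"
proof -
  have "sm z v + (T v - sm z v) \<in> hclosure (range_T_minus_zI z)"
    by (intro hclosure_add[OF hsubspace_range_T_minus_zI _
          mem_hclosure_range_T_minus_zI[OF assms(2)]]
        hclosure_sm[OF hsubspace_range_T_minus_zI assms(1)])
  then show ?thesis
    by simp
qed

lemma T_unitary_part: "v \<in> unitary_part \<Longrightarrow> T v \<in> unitary_part"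
proof -
  assume v: "v \<in> unitary_part"
  then have "v \<in> isometric_vectors"
    using unitary_part_subset by blast
  have I_minus_zT: "T v \<in> hclosure (range_I_minus_zT z)" if "z \<noteq> 0" "cmod z < 1" for z
    using T_mem_hclosure_range_I_minus_zT v \<open>v \<in> isometric_vectors\<close> that
    by (simp add: mem_unitary_part_iff)
  have "T v \<in> hclosure ((\<lambda>k. k) ` isometric_vectors)"
  proof (rule hclosure_perturbation)
    fix t :: real assume "0 < t" "t \<le> 1 / 2"
    then show "T v \<in> hclosure ((\<lambda>k. k - sm (of_real t) (T k)) ` isometric_vectors)"
      using I_minus_zT[of "of_real t"] by (simp add: range_I_minus_zT_def)
  qed (rule nm_T_le)
  then have "T v \<in> isometric_vectors"
    using hclosure_isometric_vectors by auto
  then have "T v \<in> hclosure (range_I_minus_zT z)" if "cmod z < 1" for z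
    using I_minus_zT[of z] that hclosure_subset by (cases "z = 0") auto
  moreover have "T v \<in> hclosure (range_T_minus_zI z)" if "0 < cmod z" "cmod z < 1" for z
    using T_mem_hclosure_range_T_minus_zI v \<open>v \<in> isometric_vectors\<close> that
    by (simp add: mem_unitary_part_iff)
  ultimately show "T v \<in> unitary_part"
    by (simp add: mem_unitary_part_iff)
qed

lemma unitary_part_subset_T_image: "v \<in> unitary_part \<Longrightarrow> v \<in> T ` unitary_part"
proof -
  assume v: "v \<in> unitary_part"
  have "v \<in> hclosure (T ` isometric_vectors)"
  proof (rule hclosure_perturbation)
    fix t :: real assume "0 < t" "t \<le> 1 / 2"
    then show "v \<in> hclosure ((\<lambda>k. T k - sm (of_real t) k) ` isometric_vectors)"
      using v by (simp add: mem_unitary_part_iff range_T_minus_zI_def)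
  qed (simp add: isometric_vectors_def)
  then obtain w where w: "w \<in> isometric_vectors" "v = T w"
    using hclosure_T_image_isometric_vectors by blast
  have "w \<in> hclosure (range_I_minus_zT z)" if "cmod z < 1" for z
  proof -
    have "(w - sm z (T w)) + sm z v \<in> hclosure (range_I_minus_zT z)"
      using v that
      by (intro hclosure_add[OF hsubspace_range_I_minus_zT mem_hclosure_range_I_minus_zT[OF w(1)]]
          hclosure_sm[OF hsubspace_range_I_minus_zT]) (simp add: mem_unitary_part_iff)
    then show ?thesis
      using w(2) by simp
  qed
  moreover have "w \<in> hclosure (range_T_minus_zI z)" if "0 < cmod z" "cmod z < 1" for z
  proof -
    have "sm (1 / z) (v - (T w - sm z w)) \<in> hclosure (range_T_minus_zI z)"
      using v that
      by (intro hclosure_sm[OF hsubspace_range_T_minus_zI]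
          hclosure_diff[OF hsubspace_range_T_minus_zI _ mem_hclosure_range_T_minus_zI[OF w(1)]])
        (simp add: mem_unitary_part_iff)
    then show ?thesis
      using w(2) that by simp
  qed
  ultimately have "w \<in> unitary_part"
    by (simp add: mem_unitary_part_iff)
  then show "v \<in> T ` unitary_part"
    using w(2) by blast
qed

lemma unitary_part_eq_0:
  assumes "cnu sm ip T"
  shows "unitary_part = {0}"
proof -
  have "T ` unitary_part = unitary_part"
    using T_unitary_part unitary_part_subset_T_image by blast
  moreover have "\<forall>x\<in>unitary_part. nm (T x) = nm x"
    using unitary_part_subset by (auto simp: isometric_vectors_def)
  ultimately show ?thesis
    using assms[unfolded cnu_def, rule_format, of unitary_part] closed_subspace_unitary_part
    by blast
qed

lemma graph_of_T_if_in_hclosures: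
  assumes cnu: "cnu sm ip T"
    and I_minus_zT: "\<And>z. cmod z < 1 \<Longrightarrow> x - sm z y \<in> hclosure (range_I_minus_zT z)"
    and T_minus_zI: "\<And>z. cmod z < 1 \<Longrightarrow> y - sm z x \<in> hclosure (range_T_minus_zI z)"
  shows "x \<in> isometric_vectors \<and> y = T x"
proof -
  have x: "x \<in> isometric_vectors"
    using I_minus_zT[of 0] hclosure_isometric_vectors by auto
  obtain k where k: "k \<in> isometric_vectors" "y = T k"
    using T_minus_zI[of 0] hclosure_T_image_isometric_vectors by auto
  have "x - k \<in> hclosure (range_I_minus_zT z)" if "cmod z < 1" for z
  proof -
    have "(x - sm z y) - (k - sm z (T k)) \<in> hclosure (range_I_minus_zT z)"
      by (rule hclosure_diff[OF hsubspace_range_I_minus_zT I_minus_zT[OF that]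
            mem_hclosure_range_I_minus_zT[OF k(1)]])
    then show ?thesis
      using k(2) by simp
  qed
  moreover have "x - k \<in> hclosure (range_T_minus_zI z)" if "0 < cmod z" "cmod z < 1" for z
  proof -
    have "sm (1 / z) ((T k - sm z k) - (y - sm z x)) \<in> hclosure (range_T_minus_zI z)"
      by (intro hclosure_sm[OF hsubspace_range_T_minus_zI]
          hclosure_diff[OF hsubspace_range_T_minus_zI
            mem_hclosure_range_T_minus_zI[OF k(1)] T_minus_zI[OF that(2)]])
    moreover have "(T k - sm z k) - (y - sm z x) = sm z (x - k)"
      using k(2) by simp
    ultimately show ?thesis
      using that by simp
  qed
  ultimately have "x - k \<in> unitary_part"
    by (simp add: mem_unitary_part_iff)
  then have "x = k"
    using unitary_part_eq_0[OF cnu] by simp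
  then show ?thesis
    using x k by simp
qed

lemma mem_AT_iff_hperp:
  assumes "cnu sm ip T"
  shows "(x, y) \<in> AT ip T \<longleftrightarrow>
    (\<forall>z. cmod z < 1 \<longrightarrow> (\<forall>\<omega>\<in>hperp (range_T_minus_zI z). ip y \<omega> = z * ip x \<omega>)) \<and>
    (\<forall>z. cmod z < 1 \<longrightarrow> (\<forall>\<omega>\<in>hperp (range_I_minus_zT z). z * ip y \<omega> = ip x \<omega>))"
    (is "_ \<longleftrightarrow> ?perp")
proof
  assume "(x, y) \<in> AT ip T"
  then have x: "x \<in> isometric_vectors" and y: "y = T x"
    by (auto simp: AT_def kerK_eq_isometric_vectors)
  show ?perp
  proof (intro conjI allI impI ballI)
    fix z \<omega> assume "\<omega> \<in> hperp (range_T_minus_zI z)"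
    then have "ip (T x - sm z x) \<omega> = 0"
      using x by (auto simp: hperp_def range_T_minus_zI_def)
    then show "ip y \<omega> = z * ip x \<omega>"
      using y by simp
  next
    fix z \<omega> assume "\<omega> \<in> hperp (range_I_minus_zT z)"
    then have "ip (x - sm z (T x)) \<omega> = 0"
      using x by (auto simp: hperp_def range_I_minus_zT_def)
    then show "z * ip y \<omega> = ip x \<omega>"
      using y by simp
  qed
next
  assume perp: ?perp
  have "x \<in> isometric_vectors \<and> y = T x"
  proof (rule graph_of_T_if_in_hclosures[OF assms])
    fix z :: complex assume "cmod z < 1"
    then show "x - sm z y \<in> hclosure (range_I_minus_zT z)"
      using perp by (intro mem_hclosure_if_perp_perp[OF hsubspace_range_I_minus_zT]) simp
    show "y - sm z x \<in> hclosure (range_T_minus_zI z)"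
      using perp \<open>cmod z < 1\<close>
      by (intro mem_hclosure_if_perp_perp[OF hsubspace_range_T_minus_zI]) simp
  qed
  then show "(x, y) \<in> AT ip T"
    by (auto simp: AT_def kerK_eq_isometric_vectors)
qed

end

theorem proposition4p10:
  fixes sm :: "complex \<Rightarrow> 'h::ab_group_add \<Rightarrow> 'h"
    and ip :: "'h \<Rightarrow> 'h \<Rightarrow> complex"
    and T :: "'h \<Rightarrow> 'h"
    and f g :: "bool \<times> complex \<Rightarrow> 'h \<Rightarrow> complex"
  assumes "chilbert sm ip" and "separable_h ip" and "infinite_dim_h sm"
    and "contraction_op sm ip T" and "cnu sm ip T"
    and "f \<in> frakH ip" and "g \<in> frakH ip"
  shows "(f, g) \<in> hatS ip (AT ip T) \<longleftrightarrow>
           (\<forall>z. cmod z < 1 \<longrightarrow> (\<forall>\<omega>\<in>Fdag sm ip T (True, z). g (True, z) \<omega> = z * f (True, z) \<omega>)) \<and>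
           (\<forall>z. cmod z < 1 \<longrightarrow> (\<forall>\<omega>\<in>Fdag sm ip T (False, z). z * g (False, z) \<omega> = f (False, z) \<omega>))"
proof -
  interpret hilbert_contraction sm ip T
    using assms(1,4)
    by (simp add: hilbert_contraction_def hilbert_contraction_axioms_def complex_hilbert_def)
  obtain x y where "f = hat ip x" "g = hat ip y"
    using assms(6,7) by (auto simp: frakH_def)
  then show ?thesis
    using mem_AT_iff_hperp[OF assms(5), of x y]
    by (simp add: hat_pair_mem_hatS_iff Fdag_True Fdag_False hat_apply)
qed

end
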